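(* Let $(M,g)$ be a Riemannian manifold (of any signature) and $p\in M$. Then there exist an integer $k>0$ and homogeneous polynomials $a_i\in\mathscr{P}^i(T_pM)$, $i=1,\dots,k$, such that $$\mathcal{R}^k|_p=-\sum_{i=1}^k a_i\,\mathcal{R}^{k-i}|_p$$ as $\mathrm{End}(T_pM)$-valued polynomial functions on $T_pM$.
   Context: $\nabla$ is the Levi-Civita connection and $\mathrm{R}(X,Y)Z=\nabla_X\nabla_YZ-\nabla_Y\nabla_XZ-\nabla_{[X,Y]}Z$. For $X,Y\in T_pM$, $\mathcal{R}^k|_p(X)Y=(\nabla^k_{X,\dots,X}\mathrm{R})(Y,X)X$; this is a homogeneous polynomial of degree $k+2$ in $X$. $\mathscr{P}^i(T_pM)$ is the space of homogeneous real polynomials of degree $i$ on $T_pM$. *)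

theory Defs
  imports "HOL-Analysis.Analysis"
begin

text \<open>Local-coordinate model of a (pseudo-)Riemannian manifold near p:
  an open set U of real^'n with a smooth metric g (symmetric invertible matrices).
  Tangent vectors at p are identified with real^'n via the coordinate basis.\<close>

definition partial :: "'n::finite \<Rightarrow> (real^'n \<Rightarrow> real) \<Rightarrow> real^'n \<Rightarrow> real" where
  "partial l f x = deriv (\<lambda>t. f (x + t *\<^sub>R axis l 1)) 0"

fun iter_partial :: "'n::finite list \<Rightarrow> (real^'n \<Rightarrow> real) \<Rightarrow> real^'n \<Rightarrow> real" where
  "iter_partial [] f = f"
| "iter_partial (l # ls) f = partial l (iter_partial ls f)"

definition smooth_on :: "(real^'n::finite) set \<Rightarrow> (real^'n \<Rightarrow> real) \<Rightarrow> bool" where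
  "smooth_on U f \<longleftrightarrow> (\<forall>ls. iter_partial ls f differentiable_on U)"

text \<open>Christoffel symbols: nabla_(d_j) d_k = sum_i Gamma^i_jk d_i.\<close>
definition christoffel :: "(real^'n \<Rightarrow> real^'n^'n) \<Rightarrow> real^'n \<Rightarrow> 'n::finite \<Rightarrow> 'n \<Rightarrow> 'n \<Rightarrow> real" where
  "christoffel g x i j k = (1/2) * (\<Sum>l\<in>UNIV. matrix_inv (g x) $ i $ l *
      (partial j (\<lambda>y. g y $ l $ k) x + partial k (\<lambda>y. g y $ l $ j) x - partial l (\<lambda>y. g y $ j $ k) x))"

text \<open>A (1,m)-tensor field is given by components T x i js (upper index i, lower indices js).
  Covariant derivative: the new (derivative) slot is prepended.\<close>
definition cov_deriv :: "(real^'n \<Rightarrow> real^'n^'n) \<Rightarrow> (real^'n \<Rightarrow> 'n::finite \<Rightarrow> 'n list \<Rightarrow> real)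
    \<Rightarrow> real^'n \<Rightarrow> 'n \<Rightarrow> 'n list \<Rightarrow> real" where
  "cov_deriv g T x i js = (case js of [] \<Rightarrow> 0
     | l # ms \<Rightarrow> partial l (\<lambda>y. T y i ms) x
          + (\<Sum>s\<in>UNIV. christoffel g x i l s * T x s ms)
          - (\<Sum>r<length ms. \<Sum>s\<in>UNIV. christoffel g x s l (ms ! r) * T x i (ms[r := s])))"

text \<open>Riemann tensor, R(d_a,d_b)d_c = sum_i R x i [a,b,c] d_i, with
  R(X,Y)Z = nabla_X nabla_Y Z - nabla_Y nabla_X Z - nabla_[X,Y] Z.\<close>
definition curv :: "(real^'n \<Rightarrow> real^'n^'n) \<Rightarrow> real^'n \<Rightarrow> 'n::finite \<Rightarrow> 'n list \<Rightarrow> real" where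
  "curv g x i js = (case js of [a, b, c] \<Rightarrow>
       partial a (\<lambda>y. christoffel g y i b c) x - partial b (\<lambda>y. christoffel g y i a c) x
       + (\<Sum>s\<in>UNIV. christoffel g x s b c * christoffel g x i a s
                   - christoffel g x s a c * christoffel g x i b s)
     | _ \<Rightarrow> 0)"

definition nabla_curv :: "(real^'n \<Rightarrow> real^'n^'n) \<Rightarrow> nat \<Rightarrow> real^'n \<Rightarrow> 'n::finite \<Rightarrow> 'n list \<Rightarrow> real" where
  "nabla_curv g k = (cov_deriv g ^^ k) (curv g)"

text \<open>calR g k p X Y = (nabla^k_{X,...,X} R)(Y,X)X at p.\<close>
definition calR :: "(real^'n \<Rightarrow> real^'n^'n) \<Rightarrow> nat \<Rightarrow> real^'n \<Rightarrow> real^'n \<Rightarrow> real^'n \<Rightarrow> real^'n::finite" where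
  "calR g k p X Y = (\<chi> i. \<Sum>js\<in>{js. length js = k}. \<Sum>a\<in>UNIV. \<Sum>b\<in>UNIV. \<Sum>c\<in>UNIV.
      nabla_curv g k p i (js @ [a, b, c]) * (\<Prod>r<k. X $ (js ! r)) * Y $ a * X $ b * X $ c)"

definition homog_poly :: "nat \<Rightarrow> (real^'n::finite \<Rightarrow> real) \<Rightarrow> bool" where
  "homog_poly d f \<longleftrightarrow> (\<exists>c :: 'n list \<Rightarrow> real. \<forall>X.
      f X = (\<Sum>js\<in>{js. length js = d}. c js * (\<Prod>r<d. X $ (js ! r))))"

end

theory Submission
  imports Defs "HOL-Library.Multiset_Order" "HOL-Library.Ramsey"
begin

text \<open>
  The maps \<open>X \<mapsto> R\<^sup>k(X)\<close> are \<open>End(T\<^sub>pM)\<close>-valued homogeneous polynomials of degree \<open>k + 2\<close>,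
  i.e. homogeneous elements of a free module of finite rank over the polynomial ring in the
  coordinates of \<open>X\<close>. The submodules generated by \<open>R\<^sup>0, \<dots>, R\<^sup>k\<close> form an ascending chain,
  which stabilises by Noetherianity (via leading monomials and Dickson's lemma).
  Hence some \<open>R\<^sup>k\<close> is a combination of its predecessors, and keeping track of degrees makes
  the coefficient of \<open>R\<^sup>k\<^sup>-\<^sup>i\<close> homogeneous of degree \<open>i\<close>.
\<close>

section \<open>Dickson's lemma\<close>

lemma infinite_subset_monotone:
  fixes f :: "nat \<Rightarrow> nat"
  assumes "infinite Z"
  shows "\<exists>Y\<subseteq>Z. infinite Y \<and> (\<forall>x\<in>Y. \<forall>y\<in>Y. x < y \<longrightarrow> f x \<le> f y)"
proof -
  define colour where "colour X = (if f (Min X) \<le> f (Max X) then 0 else 1 :: nat)" for X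
  have colour_pair: "colour {x, y} = (if f x \<le> f y then 0 else 1)" if "x < y" for x y
    using that by (simp add: colour_def)
  have "\<forall>x\<in>Z. \<forall>y\<in>Z. x \<noteq> y \<longrightarrow> colour {x, y} < 2"
    by (simp add: colour_def)
  then obtain Y t where Y: "Y \<subseteq> Z" "infinite Y" "t < 2"
    and homogeneous: "\<forall>x\<in>Y. \<forall>y\<in>Y. x \<noteq> y \<longrightarrow> colour {x, y} = t"
    using Ramsey2[OF assms, of colour 2] by auto
  have "t = 0"
  proof (rule ccontr)
    assume "t \<noteq> 0"
    have decreasing: "f y < f x" if "x \<in> Y" "y \<in> Y" "x < y" for x y
    proof -
      have "colour {x, y} = t" using homogeneous that by simp
      then show ?thesis using colour_pair[OF \<open>x < y\<close>] \<open>t \<noteq> 0\<close> by (simp split: if_splits)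
    qed
    have "Y \<noteq> {}" using \<open>infinite Y\<close> by auto
    then obtain x0 where "x0 \<in> Y" by blast
    then obtain x where "x \<in> Y" and least: "\<forall>y\<in>Y. f x \<le> f y"
      using ex_has_least_nat[of "\<lambda>x. x \<in> Y" x0 f] by blast
    obtain y where "y \<in> Y" "x < y"
      using \<open>infinite Y\<close> infinite_nat_iff_unbounded by blast
    then show False using decreasing[OF \<open>x \<in> Y\<close>] least by (meson not_less)
  qed
  then have "f x \<le> f y" if "x \<in> Y" "y \<in> Y" "x < y" for x y
    using homogeneous that colour_pair[OF \<open>x < y\<close>] by (simp split: if_splits)
  then show ?thesis using Y by blast
qed

lemma infinite_subset_count_monotone:
  fixes s :: "nat \<Rightarrow> 'a multiset"
  assumes "finite C" and "infinite Z"
  shows "\<exists>Y\<subseteq>Z. infinite Y \<and> (\<forall>x\<in>Y. \<forall>y\<in>Y. x < y \<longrightarrow> (\<forall>c\<in>C. count (s x) c \<le> count (s y) c))"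
  using assms(1)
proof (induction C rule: finite_induct)
  case empty
  then show ?case using assms(2) by blast
next
  case (insert c C)
  then obtain Y where "Y \<subseteq> Z" "infinite Y"
    and mono_C: "\<forall>x\<in>Y. \<forall>y\<in>Y. x < y \<longrightarrow> (\<forall>c\<in>C. count (s x) c \<le> count (s y) c)"
    by blast
  moreover obtain Y' where "Y' \<subseteq> Y" "infinite Y'"
    and "\<forall>x\<in>Y'. \<forall>y\<in>Y'. x < y \<longrightarrow> count (s x) c \<le> count (s y) c"
    using infinite_subset_monotone[OF \<open>infinite Y\<close>, of "\<lambda>x. count (s x) c"] by blast
  ultimately show ?case by (intro exI[of _ Y']) (auto simp: subset_iff)
qed

theorem dickson:
  fixes s :: "nat \<Rightarrow> 'a multiset"
  assumes "finite A" and "\<And>k. set_mset (s k) \<subseteq> A"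
  shows "\<exists>i j. i < j \<and> s i \<subseteq># s j"
proof -
  obtain Y where "infinite Y"
    and mono: "\<forall>x\<in>Y. \<forall>y\<in>Y. x < y \<longrightarrow> (\<forall>c\<in>A. count (s x) c \<le> count (s y) c)"
    using infinite_subset_count_monotone[OF assms(1), of UNIV s] by blast
  obtain i where "i \<in> Y"
    using \<open>infinite Y\<close> by (metis finite.emptyI ex_in_conv)
  moreover obtain j where "j \<in> Y" "i < j"
    using \<open>infinite Y\<close> infinite_nat_iff_unbounded by blast
  ultimately have "count (s i) c \<le> count (s j) c" for c
  proof (cases "c \<in> A")
    case False
    then have "count (s i) c = 0"
      using assms(2) by (meson count_inI subsetD)
    then show ?thesis by simp
  qed (use mono \<open>i \<in> Y\<close> \<open>j \<in> Y\<close> \<open>i < j\<close> in blast)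
  then show ?thesis
    using \<open>i < j\<close> unfolding subseteq_mset_def by blast
qed

section \<open>Leading terms of finitely supported coefficient functions\<close>

definition supp :: "('a \<Rightarrow> real) \<Rightarrow> 'a set" where
  "supp f = {\<beta>. f \<beta> \<noteq> 0}"

definition lead :: "('a::linorder \<Rightarrow> real) \<Rightarrow> 'a" where
  "lead f = Max (supp f)"

definition leading_terms :: "('a::linorder \<Rightarrow> real) set \<Rightarrow> 'a set" where
  "leading_terms A = {lead f | f. f \<in> A \<and> f \<noteq> (\<lambda>_. 0)}"

definition lin_closed :: "('a \<Rightarrow> real) set \<Rightarrow> bool" where
  "lin_closed A \<longleftrightarrow> (\<lambda>_. 0) \<in> A \<and> (\<forall>f\<in>A. \<forall>g\<in>A. (\<lambda>x. f x + g x) \<in> A)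
     \<and> (\<forall>c. \<forall>f\<in>A. (\<lambda>x. c * f x) \<in> A)"

lemma supp_eq_empty_iff: "supp f = {} \<longleftrightarrow> f = (\<lambda>_. 0)"
  by (auto simp: supp_def)

lemma supp_zero [simp]: "supp (\<lambda>_. 0) = {}"
  by (simp add: supp_def)

lemma lead_in_supp:
  assumes "finite (supp f)" and "f \<noteq> (\<lambda>_. 0)"
  shows "f (lead f) \<noteq> 0"
  using Max_in[OF assms(1)] assms(2) by (simp add: lead_def supp_eq_empty_iff) (simp add: supp_def)

lemma le_lead:
  assumes "finite (supp f)" and "f \<beta> \<noteq> 0"
  shows "\<beta> \<le> lead f"
  unfolding lead_def using assms by (intro Max_ge) (auto simp: supp_def)

lemma lin_closedD:
  assumes "lin_closed A"
  shows lin_closed_zero: "(\<lambda>_. 0) \<in> A"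
    and lin_closed_add: "f \<in> A \<Longrightarrow> g \<in> A \<Longrightarrow> (\<lambda>x. f x + g x) \<in> A"
    and lin_closed_scale: "f \<in> A \<Longrightarrow> (\<lambda>x. c * f x) \<in> A"
  using assms unfolding lin_closed_def by blast+

lemma lt_lead_cancel:
  fixes f g :: "'a::linorder \<Rightarrow> real"
  assumes "finite (supp f)" and "finite (supp g)" and "g \<noteq> (\<lambda>_. 0)" and "lead f = lead g"
    and "f \<beta> + - (f (lead g) / g (lead g)) * g \<beta> \<noteq> 0"
  shows "\<beta> < lead g"
proof -
  have "g (lead g) \<noteq> 0" using lead_in_supp[OF assms(2,3)] .
  have "f \<beta> \<noteq> 0 \<or> g \<beta> \<noteq> 0" using assms(5) by auto
  then have "\<beta> \<le> lead g"
    using le_lead[OF assms(1)] le_lead[OF assms(2)] assms(4) by auto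
  moreover have "\<beta> \<noteq> lead g" using assms(5) \<open>g (lead g) \<noteq> 0\<close> by auto
  ultimately show ?thesis by simp
qed

theorem subset_if_leading_terms_subset:
  fixes A B :: "('a::wellorder \<Rightarrow> real) set"
  assumes A: "lin_closed A" and B: "lin_closed B" and "A \<subseteq> B"
    and finite_supp: "\<And>f. f \<in> B \<Longrightarrow> finite (supp f)"
    and leading: "leading_terms B \<subseteq> leading_terms A"
  shows "B \<subseteq> A"
proof -
  have "f \<in> A" if "f \<in> B" "f \<noteq> (\<lambda>_. 0)" "lead f = \<sigma>" for f \<sigma>
    using that
  proof (induction \<sigma> arbitrary: f rule: less_induct)
    case (less \<sigma>)
    then have "\<sigma> \<in> leading_terms B" unfolding leading_terms_def by auto
    then obtain g where "g \<in> A" "g \<noteq> (\<lambda>_. 0)" "lead g = \<sigma>"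
      using leading unfolding leading_terms_def by auto
    have "g \<in> B" using \<open>g \<in> A\<close> \<open>A \<subseteq> B\<close> by blast
    define c where "c = f \<sigma> / g \<sigma>"
    define h where "h x = f x + (- c) * g x" for x
    have "h \<in> B"
      unfolding h_def by (intro lin_closed_add[OF B] lin_closed_scale[OF B] less.prems(1) \<open>g \<in> B\<close>)
    have "h \<in> A"
    proof (cases "h = (\<lambda>_. 0)")
      case True
      then show ?thesis using lin_closed_zero[OF A] by simp
    next
      case False
      then have "lead h < \<sigma>"
        using lt_lead_cancel[OF finite_supp[OF less.prems(1)] finite_supp[OF \<open>g \<in> B\<close>] \<open>g \<noteq> _\<close>]
          lead_in_supp[OF finite_supp[OF \<open>h \<in> B\<close>]] less.prems(3) \<open>lead g = \<sigma>\<close>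
        by (simp add: h_def c_def)
      then show ?thesis using less.IH \<open>h \<in> B\<close> False by simp
    qed
    have "f = (\<lambda>x. h x + c * g x)" by (simp add: h_def)
    then show ?case
      using lin_closed_add[OF A \<open>h \<in> A\<close> lin_closed_scale[OF A \<open>g \<in> A\<close>]] by simp
  qed
  then show ?thesis
    using lin_closed_zero[OF A] by (metis subsetI)
qed

section \<open>Polynomials as coefficient functions on multisets\<close>

definition mult_var :: "'a \<Rightarrow> ('a multiset \<Rightarrow> real) \<Rightarrow> 'a multiset \<Rightarrow> real" where
  "mult_var x f \<beta> = (if x \<in># \<beta> then f (\<beta> - {#x#}) else 0)"

lemma mult_var_add_mset [simp]: "mult_var x f (add_mset x \<beta>) = f \<beta>"
  by (simp add: mult_var_def)

lemma supp_mult_var: "supp (mult_var x f) = add_mset x ` supp f"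
proof (intro equalityI subsetI)
  fix \<beta> assume "\<beta> \<in> supp (mult_var x f)"
  then have "x \<in># \<beta>" and "\<beta> - {#x#} \<in> supp f"
    by (auto simp: supp_def mult_var_def split: if_splits)
  then show "\<beta> \<in> add_mset x ` supp f"
    by (metis image_eqI insert_DiffM)
qed (auto simp: supp_def)

lemma lead_mult_var:
  fixes f :: "'a::linorder multiset \<Rightarrow> real"
  assumes "finite (supp f)" and "f \<noteq> (\<lambda>_. 0)"
  shows "lead (mult_var x f) = add_mset x (lead f)"
proof -
  have "mono (add_mset x)"
    by (rule monoI) (metis add_mset_add_single add_right_mono)
  then show ?thesis
    unfolding lead_def supp_mult_var
    using mono_Max_commute assms by (metis supp_eq_empty_iff)
qed

definition poly_eval :: "('a multiset \<Rightarrow> real) \<Rightarrow> ('a \<Rightarrow> real) \<Rightarrow> real" where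
  "poly_eval f \<xi> = (\<Sum>\<beta>\<in>supp f. f \<beta> * prod_mset (image_mset \<xi> \<beta>))"

lemma poly_eval_superset:
  assumes "finite S" and "supp f \<subseteq> S"
  shows "poly_eval f \<xi> = (\<Sum>\<beta>\<in>S. f \<beta> * prod_mset (image_mset \<xi> \<beta>))"
  unfolding poly_eval_def using assms by (intro sum.mono_neutral_left) (auto simp: supp_def)

lemma poly_eval_add:
  assumes "finite (supp f)" and "finite (supp g)"
  shows "poly_eval (\<lambda>\<beta>. f \<beta> + g \<beta>) \<xi> = poly_eval f \<xi> + poly_eval g \<xi>"
proof -
  let ?S = "supp f \<union> supp g"
  have "supp (\<lambda>\<beta>. f \<beta> + g \<beta>) \<subseteq> ?S" by (auto simp: supp_def)
  then show ?thesis
    using assms poly_eval_superset[of ?S]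
    by (simp add: distrib_right sum.distrib)
qed

lemma poly_eval_scale:
  assumes "finite (supp f)"
  shows "poly_eval (\<lambda>\<beta>. c * f \<beta>) \<xi> = c * poly_eval f \<xi>"
proof -
  have "supp (\<lambda>\<beta>. c * f \<beta>) \<subseteq> supp f" by (auto simp: supp_def)
  then show ?thesis
    using assms poly_eval_superset[of "supp f"]
    by (simp add: sum_distrib_left mult.assoc)
qed

lemma poly_eval_zero [simp]: "poly_eval (\<lambda>_. 0) \<xi> = 0"
  by (simp add: poly_eval_def supp_def)

lemma poly_eval_mult_var:
  assumes "finite (supp f)"
  shows "poly_eval (mult_var x f) \<xi> = \<xi> x * poly_eval f \<xi>"
proof -
  have "poly_eval (mult_var x f) \<xi>
      = (\<Sum>\<beta>\<in>supp f. mult_var x f (add_mset x \<beta>) * prod_mset (image_mset \<xi> (add_mset x \<beta>)))"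
    unfolding poly_eval_def supp_mult_var by (simp add: sum.reindex inj_on_def)
  then show ?thesis
    by (simp add: poly_eval_def sum_distrib_left ac_simps)
qed

lemma poly_eval_sum:
  assumes "finite I" and "\<And>q. q \<in> I \<Longrightarrow> finite (supp (f q))"
  shows "poly_eval (\<lambda>\<beta>. \<Sum>q\<in>I. f q \<beta>) \<xi> = (\<Sum>q\<in>I. poly_eval (f q) \<xi>)"
  using assms
proof (induction I rule: finite_induct)
  case (insert q I)
  have "supp (\<lambda>\<beta>. \<Sum>q\<in>I. f q \<beta>) \<subseteq> (\<Union>q\<in>I. supp (f q))"
    by (auto simp: supp_def intro: sum.not_neutral_contains_not_neutral)
  then have "finite (supp (\<lambda>\<beta>. \<Sum>q\<in>I. f q \<beta>))"
    using insert by (meson finite_UN_I finite_subset insertCI)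
  then show ?case
    using insert by (simp add: poly_eval_add)
qed simp

lemma poly_eval_monomial:
  "poly_eval (\<lambda>\<beta>. if \<beta> = m then c else 0) \<xi> = c * prod_mset (image_mset \<xi> m)"
  by (subst poly_eval_superset[of "{m}"]) (auto simp: supp_def)

lemma homog_poly_zero: "homog_poly d (\<lambda>_. 0)"
  unfolding homog_poly_def by (rule exI[of _ "\<lambda>_. 0"]) simp

lemma homog_poly_one: "homog_poly 0 (\<lambda>_. 1)"
  unfolding homog_poly_def by (rule exI[of _ "\<lambda>_. 1"]) (simp add: length_0_conv)

lemma homog_poly_add:
  assumes "homog_poly d f" and "homog_poly d g"
  shows "homog_poly d (\<lambda>X. f X + g X)"
proof -
  obtain c c' where "\<forall>X. f X = (\<Sum>js\<in>{js. length js = d}. c js * (\<Prod>r<d. X $ (js ! r)))"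
    and "\<forall>X. g X = (\<Sum>js\<in>{js. length js = d}. c' js * (\<Prod>r<d. X $ (js ! r)))"
    using assms unfolding homog_poly_def by blast
  then show ?thesis
    unfolding homog_poly_def by (intro exI[of _ "\<lambda>js. c js + c' js"]) (simp add: distrib_right sum.distrib)
qed

lemma homog_poly_scale:
  assumes "homog_poly d f"
  shows "homog_poly d (\<lambda>X. a * f X)"
proof -
  obtain c where "\<forall>X. f X = (\<Sum>js\<in>{js. length js = d}. c js * (\<Prod>r<d. X $ (js ! r)))"
    using assms unfolding homog_poly_def by blast
  then show ?thesis
    unfolding homog_poly_def by (intro exI[of _ "\<lambda>js. a * c js"]) (simp add: sum_distrib_left mult.assoc)
qed

lemma homog_poly_mult_component:
  fixes f :: "real^'n::finite \<Rightarrow> real"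
  assumes "homog_poly d f"
  shows "homog_poly (Suc d) (\<lambda>X. X $ l * f X)"
proof -
  obtain c where c: "\<And>X. f X = (\<Sum>js\<in>{js. length js = d}. c js * (\<Prod>r<d. X $ (js ! r)))"
    using assms unfolding homog_poly_def by blast
  define c' where "c' js = (if hd js = l then c (tl js) else 0)" for js :: "'n list"
  have lists_Suc: "{js :: 'n list. length js = Suc d} = (\<lambda>(js, m). m # js) ` ({js. length js = d} \<times> UNIV)"
    using lists_length_Suc_eq[of UNIV d] by simp
  have "(\<Sum>js\<in>{js. length js = Suc d}. c' js * (\<Prod>r<Suc d. X $ (js ! r)))
      = (\<Sum>js\<in>{js. length js = d}. \<Sum>m\<in>UNIV. c' (m # js) * (X $ m * (\<Prod>r<d. X $ (js ! r))))" for X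
    unfolding lists_Suc
    by (simp add: sum.reindex inj_on_def sum.cartesian_product prod.lessThan_Suc_shift
        case_prod_unfold del: prod.lessThan_Suc)
  also have "\<dots> X = X $ l * f X" for X
    by (simp add: c'_def c sum_distrib_left ac_simps if_distrib if_distribR sum.delta cong: if_cong)
  finally show ?thesis
    unfolding homog_poly_def by (intro exI[of _ c']) simp
qed

section \<open>Graded submodules generated by a sequence\<close>

text \<open>The monomial \<open>x\<^sup>\<alpha> e\<^sub>w\<close> of the free module with basis \<open>W\<close> over the polynomial ring in the
  variables \<open>E\<close> is encoded as the multiset \<open>\<alpha> + {#w#}\<close>.\<close>

definition module_monomials :: "'a set \<Rightarrow> 'a set \<Rightarrow> nat \<Rightarrow> 'a multiset set" where
  "module_monomials E W d = (\<lambda>(w, \<alpha>). add_mset w \<alpha>) ` (W \<times> multisets_of_size E d)"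

lemma module_monomialsE:
  assumes "\<beta> \<in> module_monomials E W d"
  obtains w \<alpha> where "\<beta> = add_mset w \<alpha>" "w \<in> W" "set_mset \<alpha> \<subseteq> E" "size \<alpha> = d"
  using assms by (auto simp: module_monomials_def multisets_of_size_def)

lemma finite_module_monomials:
  "finite E \<Longrightarrow> finite W \<Longrightarrow> finite (module_monomials E W d)"
  by (simp add: module_monomials_def finite_multisets_of_size)

lemma size_module_monomials: "\<beta> \<in> module_monomials E W d \<Longrightarrow> size \<beta> = Suc d"
  by (auto elim: module_monomialsE)

lemma set_module_monomials: "\<beta> \<in> module_monomials E W d \<Longrightarrow> set_mset \<beta> \<subseteq> E \<union> W"
  by (auto elim!: module_monomialsE)

lemma add_mset_module_monomials:
  assumes "x \<in> E" and "\<beta> \<in> module_monomials E W d"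
  shows "add_mset x \<beta> \<in> module_monomials E W (Suc d)"
proof -
  obtain w \<alpha> where "\<beta> = add_mset w \<alpha>" "w \<in> W" "set_mset \<alpha> \<subseteq> E" "size \<alpha> = d"
    using assms(2) by (rule module_monomialsE)
  then have "add_mset x \<beta> = add_mset w (add_mset x \<alpha>)" and "add_mset x \<alpha> \<in> multisets_of_size E (Suc d)"
    using assms(1) by (auto simp: multisets_of_size_def)
  then show ?thesis
    using \<open>w \<in> W\<close> unfolding module_monomials_def
    by (auto intro!: image_eqI[of _ _ "(w, add_mset x \<alpha>)"])
qed

lemma module_monomials_subset_mset:
  assumes "E \<inter> W = {}"
    and "\<beta> \<in> module_monomials E W d" and "\<beta>' \<in> module_monomials E W d'" and "\<beta> \<subseteq># \<beta>'"
  shows "\<exists>\<gamma>. \<beta>' = \<beta> + \<gamma> \<and> set_mset \<gamma> \<subseteq> E"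
proof -
  obtain w \<alpha> where \<beta>: "\<beta> = add_mset w \<alpha>" "w \<in> W" "set_mset \<alpha> \<subseteq> E"
    using assms(2) by (rule module_monomialsE)
  obtain w' \<alpha>' where \<beta>': "\<beta>' = add_mset w' \<alpha>'" "w' \<in> W" "set_mset \<alpha>' \<subseteq> E"
    using assms(3) by (rule module_monomialsE)
  have "w \<notin># \<alpha>'" "w' \<notin># \<alpha>'"
    using assms(1) \<beta> \<beta>' by auto
  moreover have "w \<in># \<beta>'"
    using assms(4) \<beta>(1) by (auto dest: mset_subset_eqD)
  ultimately have "w' = w" using \<beta>'(1) by auto
  then have "\<alpha> \<subseteq># \<alpha>'"
    using assms(4) \<beta>(1) \<beta>'(1) by simp
  then have "\<beta>' = \<beta> + (\<alpha>' - \<alpha>)"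
    using \<beta>(1) \<beta>'(1) \<open>w' = w\<close> by (simp add: subset_mset.add_diff_inverse)
  moreover have "set_mset (\<alpha>' - \<alpha>) \<subseteq> E"
    using \<beta>'(3) by (meson in_diffD subset_iff)
  ultimately show ?thesis by blast
qed

locale graded_generators =
  fixes E W :: "'a::wellorder set" and deg :: "nat \<Rightarrow> nat" and v :: "nat \<Rightarrow> 'a multiset \<Rightarrow> real"
  assumes finite_E: "finite E" and finite_W: "finite W" and disjoint: "E \<inter> W = {}"
    and supp_generator: "supp (v j) \<subseteq> module_monomials E W (deg j)"
begin

inductive graded_span :: "nat \<Rightarrow> nat \<Rightarrow> ('a multiset \<Rightarrow> real) \<Rightarrow> bool" for k where
  span_generator: "j \<le> k \<Longrightarrow> graded_span k (deg j) (v j)"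
| span_zero: "graded_span k d (\<lambda>_. 0)"
| span_add: "graded_span k d f \<Longrightarrow> graded_span k d g \<Longrightarrow> graded_span k d (\<lambda>\<beta>. f \<beta> + g \<beta>)"
| span_scale: "graded_span k d f \<Longrightarrow> graded_span k d (\<lambda>\<beta>. c * f \<beta>)"
| span_mult_var: "x \<in> E \<Longrightarrow> graded_span k d f \<Longrightarrow> graded_span k (Suc d) (mult_var x f)"

lemma graded_span_mono: "graded_span k d f \<Longrightarrow> k \<le> k' \<Longrightarrow> graded_span k' d f"
  by (induction rule: graded_span.induct) (auto intro: graded_span.intros)

lemma supp_graded_span: "graded_span k d f \<Longrightarrow> supp f \<subseteq> module_monomials E W d"
proof (induction rule: graded_span.induct)
  case (span_add d f g)
  have "supp (\<lambda>\<beta>. f \<beta> + g \<beta>) \<subseteq> supp f \<union> supp g" by (auto simp: supp_def)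
  then show ?case using span_add.IH by blast
next
  case (span_scale d f c)
  have "supp (\<lambda>\<beta>. c * f \<beta>) \<subseteq> supp f" by (auto simp: supp_def)
  then show ?case using span_scale.IH by blast
next
  case (span_mult_var x d f)
  then show ?case by (auto simp: supp_mult_var intro: add_mset_module_monomials)
qed (simp_all add: supp_generator)

lemma finite_supp_graded_span: "graded_span k d f \<Longrightarrow> finite (supp f)"
  using supp_graded_span finite_module_monomials[OF finite_E finite_W] by (meson finite_subset)

lemma lin_closed_graded_span: "lin_closed {f. graded_span k d f}"
  by (auto simp: lin_closed_def intro: graded_span.intros)

definition lead_monomials :: "nat \<Rightarrow> 'a multiset set" where
  "lead_monomials k = (\<Union>d. leading_terms {f. graded_span k d f})"

lemma lead_monomials_mono: "k \<le> k' \<Longrightarrow> lead_monomials k \<subseteq> lead_monomials k'"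
  by (auto simp: lead_monomials_def leading_terms_def intro: graded_span_mono)

lemma leading_terms_graded_span: "leading_terms {f. graded_span k d f} \<subseteq> module_monomials E W d"
proof
  fix \<beta> assume "\<beta> \<in> leading_terms {f. graded_span k d f}"
  then obtain f where "graded_span k d f" "f \<noteq> (\<lambda>_. 0)" "\<beta> = lead f"
    by (auto simp: leading_terms_def)
  then have "\<beta> \<in> supp f"
    using lead_in_supp[OF finite_supp_graded_span] by (simp add: supp_def)
  then show "\<beta> \<in> module_monomials E W d"
    using supp_graded_span \<open>graded_span k d f\<close> by blast
qed

lemma lead_monomials_add:
  assumes "\<beta> \<in> lead_monomials k" and "set_mset \<gamma> \<subseteq> E"
  shows "\<beta> + \<gamma> \<in> lead_monomials k"
  using assms(2)
proof (induction \<gamma>)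
  case empty
  then show ?case using assms(1) by simp
next
  case (add x \<gamma>)
  then obtain f d where "graded_span k d f" "f \<noteq> (\<lambda>_. 0)" "lead f = \<beta> + \<gamma>"
    by (auto simp: lead_monomials_def leading_terms_def)
  moreover have "x \<in> E" using add.prems by simp
  ultimately have "graded_span k (Suc d) (mult_var x f)"
    and "mult_var x f \<noteq> (\<lambda>_. 0)"
    and "lead (mult_var x f) = \<beta> + add_mset x \<gamma>"
    using lead_mult_var[OF finite_supp_graded_span] supp_mult_var[of x f]
    by (auto intro: span_mult_var simp: supp_eq_empty_iff[symmetric])
  then have "\<beta> + add_mset x \<gamma> \<in> leading_terms {f. graded_span k (Suc d) f}"
    unfolding leading_terms_def by (auto intro!: exI[of _ "mult_var x f"])
  then show ?case
    unfolding lead_monomials_def by blast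
qed

lemma graded_span_if_lead_monomials_stable:
  assumes "lead_monomials (Suc k) \<subseteq> lead_monomials k"
  shows "graded_span k (deg (Suc k)) (v (Suc k))"
proof -
  let ?A = "{f. graded_span k (deg (Suc k)) f}" and ?B = "{f. graded_span (Suc k) (deg (Suc k)) f}"
  have "leading_terms ?B \<subseteq> leading_terms ?A"
  proof
    fix \<beta> assume "\<beta> \<in> leading_terms ?B"
    then have \<beta>: "\<beta> \<in> module_monomials E W (deg (Suc k))"
      using leading_terms_graded_span by blast
    have "\<beta> \<in> lead_monomials (Suc k)"
      using \<open>\<beta> \<in> leading_terms ?B\<close> unfolding lead_monomials_def by blast
    then have "\<beta> \<in> lead_monomials k" using assms by blast
    then obtain d where d: "\<beta> \<in> leading_terms {f. graded_span k d f}"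
      by (auto simp: lead_monomials_def)
    moreover have "d = deg (Suc k)"
      using leading_terms_graded_span d \<beta> by (metis subsetD size_module_monomials nat.inject)
    ultimately show "\<beta> \<in> leading_terms ?A" by simp
  qed
  moreover have "?A \<subseteq> ?B"
    using graded_span_mono[of k _ _ "Suc k"] by auto
  ultimately have "?B \<subseteq> ?A"
    using lin_closed_graded_span finite_supp_graded_span
    by (intro subset_if_leading_terms_subset[of ?A ?B]) auto
  moreover have "v (Suc k) \<in> ?B"
    using span_generator[of "Suc k" "Suc k"] by simp
  ultimately show ?thesis by auto
qed

text \<open>If no generator ever fell into the span of its predecessors, the sets of leading monomials
  would grow strictly forever, and the new leading monomials would form a sequence without a
  dividing pair, contradicting Dickson's lemma.\<close>

theorem graded_span_next_generator: "\<exists>k. graded_span k (deg (Suc k)) (v (Suc k))"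
proof (rule ccontr)
  assume "\<nexists>k. graded_span k (deg (Suc k)) (v (Suc k))"
  then have "\<forall>k. \<exists>\<beta>. \<beta> \<in> lead_monomials (Suc k) \<and> \<beta> \<notin> lead_monomials k"
    using graded_span_if_lead_monomials_stable by blast
  then obtain s where s: "\<And>k. s k \<in> lead_monomials (Suc k)" "\<And>k. s k \<notin> lead_monomials k"
    by metis
  have s_module: "\<exists>d. s k \<in> module_monomials E W d" for k
    using s(1)[of k] leading_terms_graded_span by (auto simp: lead_monomials_def)
  then have "set_mset (s k) \<subseteq> E \<union> W" for k
    using set_module_monomials by blast
  then obtain i j where "i < j" "s i \<subseteq># s j"
    using dickson[of "E \<union> W" s] finite_E finite_W by auto
  moreover obtain d d' where "s i \<in> module_monomials E W d" "s j \<in> module_monomials E W d'"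
    using s_module by blast
  ultimately obtain \<gamma> where "s j = s i + \<gamma>" "set_mset \<gamma> \<subseteq> E"
    using module_monomials_subset_mset[OF disjoint] by blast
  then have "s j \<in> lead_monomials (Suc i)"
    using lead_monomials_add s(1) by simp
  moreover have "lead_monomials (Suc i) \<subseteq> lead_monomials j"
    using \<open>i < j\<close> by (simp add: lead_monomials_mono)
  ultimately show False using s(2) by blast
qed

text \<open>Since \<open>d - deg j\<close> is truncated, the coefficients \<open>a j\<close> with \<open>d < deg j\<close> are required
  to vanish; this keeps the degrees exact under multiplication by a variable.\<close>

definition homog_combination :: "('n::finite \<Rightarrow> 'a) \<Rightarrow> nat \<Rightarrow> nat \<Rightarrow> ('a multiset \<Rightarrow> real)
    \<Rightarrow> (nat \<Rightarrow> real^'n \<Rightarrow> real) \<Rightarrow> bool" where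
  "homog_combination var k d f a \<longleftrightarrow>
     (\<forall>j. homog_poly (d - deg j) (a j) \<and> (d < deg j \<longrightarrow> a j = (\<lambda>_. 0))) \<and>
     (\<forall>\<xi>. poly_eval f \<xi> = (\<Sum>j\<le>k. a j (\<chi> l. \<xi> (var l)) * poly_eval (v j) \<xi>))"

lemma homog_combination_generator:
  assumes "j \<le> k"
  shows "homog_combination var k (deg j) (v j) (\<lambda>i X. if i = j then 1 else 0)"
  using assms
  by (auto simp: homog_combination_def homog_poly_one homog_poly_zero if_distrib if_distribR sum.delta
      cong: if_cong)

lemma homog_combination_zero: "homog_combination var k d (\<lambda>_. 0) (\<lambda>_ _. 0)"
  by (simp add: homog_combination_def homog_poly_zero)

lemma homog_combination_add:
  assumes "homog_combination var k d f a" and "homog_combination var k d g b"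
    and "finite (supp f)" and "finite (supp g)"
  shows "homog_combination var k d (\<lambda>\<beta>. f \<beta> + g \<beta>) (\<lambda>j X. a j X + b j X)"
  using assms
  by (simp add: homog_combination_def homog_poly_add poly_eval_add distrib_right sum.distrib)

lemma homog_combination_scale:
  assumes "homog_combination var k d f a" and "finite (supp f)"
  shows "homog_combination var k d (\<lambda>\<beta>. c * f \<beta>) (\<lambda>j X. c * a j X)"
  using assms
  by (simp add: homog_combination_def homog_poly_scale poly_eval_scale sum_distrib_left mult.assoc)

lemma homog_combination_mult_var:
  assumes "homog_combination var k d f a" and "finite (supp f)"
  shows "homog_combination var k (Suc d) (mult_var (var l) f) (\<lambda>j X. X $ l * a j X)"
proof -
  have "homog_poly (Suc d - deg j) (\<lambda>X. X $ l * a j X)" for j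
  proof (cases "d < deg j")
    case True
    then show ?thesis using assms(1) by (simp add: homog_combination_def homog_poly_zero)
  next
    case False
    then have "Suc d - deg j = Suc (d - deg j)" by simp
    then show ?thesis
      using assms(1) by (simp add: homog_combination_def homog_poly_mult_component)
  qed
  then show ?thesis
    using assms
    by (simp add: homog_combination_def poly_eval_mult_var sum_distrib_left mult.assoc)
qed

lemma graded_span_homog_combination:
  assumes "E \<subseteq> range var" and "graded_span k d f"
  shows "\<exists>a. homog_combination var k d f a"
  using assms(2)
proof (induction rule: graded_span.induct)
  case (span_generator j)
  then show ?case by (metis homog_combination_generator)
next
  case (span_zero d)
  show ?case by (metis homog_combination_zero)
next
  case (span_add d f g)
  then obtain a b where a: "homog_combination var k d f a" and b: "homog_combination var k d g b"
    by blast
  show ?case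
    using homog_combination_add[OF a b finite_supp_graded_span finite_supp_graded_span] span_add.hyps
    by blast
next
  case (span_scale d f c)
  then obtain a where a: "homog_combination var k d f a"
    by blast
  show ?case
    using homog_combination_scale[OF a finite_supp_graded_span] span_scale.hyps by blast
next
  case (span_mult_var x d f)
  then obtain a where a: "homog_combination var k d f a"
    by blast
  obtain l where "x = var l"
    using span_mult_var.hyps(1) assms(1) by blast
  then show ?case
    using homog_combination_mult_var[OF a finite_supp_graded_span] span_mult_var.hyps by blast
qed

end

section \<open>The curvature polynomials\<close>

lemma prod_mset_image_mset_mset: "prod_mset (image_mset f (mset xs)) = (\<Prod>r<length xs. f (xs ! r))"
  by (induction xs) (simp_all add: prod.lessThan_Suc_shift del: prod.lessThan_Suc)

text \<open>Variables are natural numbers coding \<open>'n + 'n \<times> 'n\<close>: \<open>Inl l\<close> is the coordinate \<open>X\<^sub>l\<close> and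
  \<open>Inr (i, a)\<close> the matrix unit \<open>e\<^sub>i\<^sub>a\<close> of \<open>End(\<real>\<^sup>n)\<close>, so that \<open>curv_coeffs g p k\<close> is
  \<open>X \<mapsto> R\<^sup>k(X)\<close> written in this basis.\<close>

definition curv_monomial :: "'n::finite list \<Rightarrow> 'n \<Rightarrow> 'n \<Rightarrow> 'n \<Rightarrow> 'n \<Rightarrow> nat multiset" where
  "curv_monomial js a b c i =
     image_mset to_nat (add_mset (Inr (i, a)) (image_mset Inl (mset (js @ [b, c]))))"

definition curv_coeffs :: "(real^'n \<Rightarrow> real^'n^'n) \<Rightarrow> real^'n \<Rightarrow> nat \<Rightarrow> nat multiset \<Rightarrow> real" where
  "curv_coeffs g p k \<beta> = (\<Sum>(js, a, b, c, i) \<in> {js. length js = k} \<times> UNIV \<times> UNIV \<times> UNIV \<times> UNIV.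
     if \<beta> = curv_monomial js a b c i then nabla_curv g k p i (js @ [a, b, c]) else 0)"

text \<open>Evaluating \<open>e\<^sub>i\<^sub>'\<^sub>a\<close> to \<open>Y\<^sub>a\<close> if \<open>i' = i\<close> and to \<open>0\<close> otherwise picks the \<open>i\<close>-th component
  of \<open>R\<^sup>k(X) Y\<close>.\<close>

definition curv_valuation :: "real^'n \<Rightarrow> real^'n \<Rightarrow> 'n::finite \<Rightarrow> nat \<Rightarrow> real" where
  "curv_valuation X Y i n =
     (case from_nat n :: 'n + 'n \<times> 'n of Inl l \<Rightarrow> X $ l | Inr (i', a) \<Rightarrow> if i' = i then Y $ a else 0)"

lemma curv_valuation_monomial:
  "prod_mset (image_mset (curv_valuation X Y i) (curv_monomial js a b c i'))
     = (if i' = i then Y $ a * (\<Prod>r<length js. X $ (js ! r)) * X $ b * X $ c else 0)"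
  by (simp add: curv_monomial_def curv_valuation_def multiset.map_comp comp_def
      prod_mset_image_mset_mset)

lemma poly_eval_curv_coeffs:
  fixes g :: "real^'n::finite \<Rightarrow> real^'n^'n"
  shows "poly_eval (curv_coeffs g p k) (curv_valuation X Y i) = calR g k p X Y $ i"
proof -
  let ?S = "{js :: 'n list. length js = k} \<times> (UNIV :: 'n set) \<times> (UNIV :: 'n set) \<times> (UNIV :: 'n set) \<times> (UNIV :: 'n set)"
  have "finite ?S"
    using finite_lists_length_eq[of "UNIV :: 'n set" k] by simp
  then have "poly_eval (curv_coeffs g p k) (curv_valuation X Y i)
      = (\<Sum>(js, a, b, c, i') \<in> ?S. nabla_curv g k p i' (js @ [a, b, c])
           * prod_mset (image_mset (curv_valuation X Y i) (curv_monomial js a b c i')))"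
    unfolding curv_coeffs_def[abs_def]
    by (subst poly_eval_sum) (auto simp: case_prod_unfold poly_eval_monomial supp_def)
  also have "\<dots> = (\<Sum>js | length js = k. \<Sum>a\<in>UNIV. \<Sum>b\<in>UNIV. \<Sum>c\<in>UNIV. \<Sum>i'\<in>UNIV.
      nabla_curv g k p i' (js @ [a, b, c])
        * prod_mset (image_mset (curv_valuation X Y i) (curv_monomial js a b c i')))"
    unfolding sum.cartesian_product[symmetric] ..
  also have "\<dots> = (\<Sum>js | length js = k. \<Sum>a\<in>UNIV. \<Sum>b\<in>UNIV. \<Sum>c\<in>UNIV.
      nabla_curv g k p i (js @ [a, b, c]) * (\<Prod>r<k. X $ (js ! r)) * Y $ a * X $ b * X $ c)"
    by (simp add: curv_valuation_monomial if_distrib sum.delta ac_simps cong: if_cong)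
  finally show ?thesis by (simp add: calR_def)
qed

lemma curv_monomial_module_monomials:
  fixes js :: "'n::finite list"
  shows "curv_monomial js a b c i \<in> module_monomials (range (\<lambda>l. to_nat (Inl l :: 'n::finite + 'n \<times> 'n)))
     (range (\<lambda>q. to_nat (Inr q :: 'n + 'n \<times> 'n))) (length js + 2)"
proof -
  define \<alpha> where "\<alpha> = image_mset (\<lambda>l. to_nat (Inl l :: 'n + 'n \<times> 'n)) (mset (js @ [b, c]))"
  have "curv_monomial js a b c i = add_mset (to_nat (Inr (i, a) :: 'n + 'n \<times> 'n)) \<alpha>"
    by (simp add: curv_monomial_def \<alpha>_def multiset.map_comp comp_def)
  moreover have "\<alpha> \<in> multisets_of_size (range (\<lambda>l. to_nat (Inl l :: 'n + 'n \<times> 'n))) (length js + 2)"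
    by (auto simp: \<alpha>_def multisets_of_size_def)
  ultimately show ?thesis
    unfolding module_monomials_def by (auto intro!: image_eqI[of _ _ "(to_nat (Inr (i, a)), \<alpha>)"])
qed

lemma supp_curv_coeffs:
  fixes g :: "real^'n::finite \<Rightarrow> real^'n^'n"
  shows "supp (curv_coeffs g p k)
     \<subseteq> module_monomials (range (\<lambda>l. to_nat (Inl l :: 'n + 'n \<times> 'n)))
          (range (\<lambda>q. to_nat (Inr q :: 'n + 'n \<times> 'n))) (k + 2)" (is "_ \<subseteq> ?M")
proof
  fix \<beta> assume "\<beta> \<in> supp (curv_coeffs g p k)"
  then obtain q where "q \<in> {js. length js = k} \<times> UNIV"
    and "(case q of (js, a, b, c, i) \<Rightarrow>
           if \<beta> = curv_monomial js a b c i then nabla_curv g k p i (js @ [a, b, c]) else 0) \<noteq> 0"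
    unfolding supp_def curv_coeffs_def by (auto elim!: sum.not_neutral_contains_not_neutral)
  moreover obtain js a b c i where "q = (js, a, b, c, i :: 'n)"
    by (cases q)
  ultimately have "length js = k" "\<beta> = curv_monomial js a b c i"
    by (auto split: if_splits)
  then show "\<beta> \<in> ?M"
    using curv_monomial_module_monomials by metis
qed

lemma curv_graded_generators:
  fixes g :: "real^'n::finite \<Rightarrow> real^'n^'n"
  shows "graded_generators (range (\<lambda>l. to_nat (Inl l :: 'n + 'n \<times> 'n)))
     (range (\<lambda>q. to_nat (Inr q :: 'n + 'n \<times> 'n))) (\<lambda>k. k + 2) (curv_coeffs g p)"
  by unfold_locales (auto simp del: add_2_eq_Suc' add_2_eq_Suc intro: supp_curv_coeffs[THEN subsetD])

theorem curvature_recursion: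
  fixes g :: "real^'n::finite \<Rightarrow> real^'n^'n"
  shows "\<exists>k b. (\<forall>j\<le>k. homog_poly (Suc k - j) (b j)) \<and>
           (\<forall>X Y. calR g (Suc k) p X Y = (\<Sum>j\<le>k. b j X *\<^sub>R calR g j p X Y))"
proof -
  interpret graded_generators "range (\<lambda>l. to_nat (Inl l :: 'n + 'n \<times> 'n))"
    "range (\<lambda>q. to_nat (Inr q :: 'n + 'n \<times> 'n))" "\<lambda>k. k + 2" "curv_coeffs g p"
    by (rule curv_graded_generators)
  obtain k where "graded_span k (Suc k + 2) (curv_coeffs g p (Suc k))"
    using graded_span_next_generator by auto
  then obtain b where "homog_combination (\<lambda>l. to_nat (Inl l :: 'n + 'n \<times> 'n)) k (Suc k + 2)
      (curv_coeffs g p (Suc k)) b"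
    using graded_span_homog_combination by blast
  then have hom: "\<forall>j. homog_poly (Suc k + 2 - (j + 2)) (b j)"
    and eval: "\<forall>\<xi>. poly_eval (curv_coeffs g p (Suc k)) \<xi>
      = (\<Sum>j\<le>k. b j (\<chi> l. \<xi> (to_nat (Inl l :: 'n + 'n \<times> 'n))) * poly_eval (curv_coeffs g p j) \<xi>)"
    unfolding homog_combination_def by simp_all
  have "(\<chi> l. curv_valuation X Y i (to_nat (Inl l :: 'n + 'n \<times> 'n))) = X" for X Y i
    by (simp add: curv_valuation_def vec_eq_iff)
  then have "calR g (Suc k) p X Y $ i = (\<Sum>j\<le>k. b j X *\<^sub>R calR g j p X Y) $ i" for X Y i
    using eval[rule_format, of "curv_valuation X Y i"] by (simp add: poly_eval_curv_coeffs sum_component)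
  moreover have "homog_poly (Suc k - j) (b j)" for j
    using hom by (simp add: Suc_diff_le)
  ultimately show ?thesis
    by (intro exI[of _ k] exI[of _ b]) (simp add: vec_eq_iff)
qed

lemma sum_reverse_atLeast1:
  "(\<Sum>i=1..Suc k. f (Suc k - i)) = (\<Sum>j\<le>k. f j :: 'a::comm_monoid_add)"
proof -
  have "(\<Sum>i=1..Suc k. f (Suc k - i)) = (\<Sum>i<Suc k. f (Suc k - Suc i))"
    by (simp only: One_nat_def sum.atLeast1_atMost_eq)
  also have "\<dots> = (\<Sum>j\<le>k. f j)"
    unfolding lessThan_Suc_atMost[symmetric] by (rule sum.nat_diff_reindex)
  finally show ?thesis .
qed

theorem mainTheorem16:
  fixes g :: "real^'n::finite \<Rightarrow> real^'n^'n" and U :: "(real^'n) set" and p :: "real^'n"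
  assumes "open U" and "p \<in> U"
    and "\<forall>x\<in>U. transpose (g x) = g x"
    and "\<forall>x\<in>U. invertible (g x)"
    and "\<forall>i j. smooth_on U (\<lambda>x. g x $ i $ j)"
  shows "\<exists>k>0. \<exists>a :: nat \<Rightarrow> real^'n \<Rightarrow> real.
           (\<forall>i\<in>{1..k}. homog_poly i (a i)) \<and>
           (\<forall>X Y. calR g k p X Y = - (\<Sum>i=1..k. a i X *\<^sub>R calR g (k - i) p X Y))"
proof -
  obtain k b where hom: "\<forall>j\<le>k. homog_poly (Suc k - j) (b j)"
    and recursion: "\<forall>X Y. calR g (Suc k) p X Y = (\<Sum>j\<le>k. b j X *\<^sub>R calR g j p X Y)"
    using curvature_recursion by blast
  define a where "a i X = - b (Suc k - i) X" for i X
  have "homog_poly i (a i)" if "i \<in> {1..Suc k}" for i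
  proof -
    have "Suc k - i \<le> k" and "Suc k - (Suc k - i) = i" using that by auto
    then have "homog_poly i (b (Suc k - i))"
      using hom by metis
    then show ?thesis
      using homog_poly_scale[of i _ "-1"] by (simp add: a_def[abs_def])
  qed
  moreover have "calR g (Suc k) p X Y = - (\<Sum>i=1..Suc k. a i X *\<^sub>R calR g (Suc k - i) p X Y)" for X Y
    using recursion sum_reverse_atLeast1[of "\<lambda>j. b j X *\<^sub>R calR g j p X Y"]
    by (simp add: a_def sum_negf)
  ultimately show ?thesis
    by (intro exI[of _ "Suc k"] conjI exI[of _ a]) simp_all
qed

end
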